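(* Suppose every IDR of the system $\mathcal{I}(E,\mathcal{F}(E))$ is of Restricted Case II form, and let $E'\subseteq E$. Then for any two entities $e_i,e_j\in E$, $$PS(e_i\mid E')\cup PS(e_j\mid E') = PS(\{e_i,e_j\}\mid E').$$
   Context: A system $\mathcal{I}(E,\mathcal{F}(E))$ consists of a finite set $E$ of entities, $n=|E|$, and a set $\mathcal{F}(E)$ of interdependency relations (IDRs). Each entity $e$ has at most one IDR, of the form $e\leftarrow \sum_{i=1}^{m}\prod_{x\in s_i}x$ (a disjunction of conjunctions), where each minterm $s_i$ is a nonempty subset of $E$; it means $e$ is operational only if for at least one minterm all entities of that minterm are operational. Entities without an IDR can only fail initially. Failure dynamics: given an initially failing set $E'\subseteq E$ and a set $H\subseteq E$ of hardened entities (hardened entities never fail), put $F_0=E'\setminus H$ and $F_{t+1}=F_t\cup\{e\in E\setminus H: e \text{ has an IDR and every minterm of it contains an element of } F_t\}$; the final failed set is $F(E',H):=F_{n-1}$. $\mathrm{KillSet}(E'):=F(E',\emptyset)$. Protection set: for $H\subseteq E$, $PS(H\mid E'):=\mathrm{KillSet}(E')\setminus F(E',H)$ (the entities prevented from failing by hardening $H$); for a single entity, $PS(e\mid E'):=PS(\{e\}\mid E')$. Restricted Case II: every IDR has the form $e_i\leftarrow \sum_{q=1}^{p} e_q$ with $e_q\in E$ (a disjunction of minterms of size one). *)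

theory Defs
  imports Main
begin

text \<open>An interdependency system: a finite entity set E and a partial map idr assigning
  to an entity its IDR, given as the set of its minterms (each a nonempty subset of E).
  idr e = None means e has no IDR.\<close>

definition wf_system :: "'a set \<Rightarrow> ('a \<Rightarrow> 'a set set option) \<Rightarrow> bool" where
  "wf_system E idr \<longleftrightarrow> finite E \<and>
     (\<forall>e S. idr e = Some S \<longrightarrow> e \<in> E \<and> finite S \<and> S \<noteq> {} \<and>
        (\<forall>s\<in>S. s \<noteq> {} \<and> s \<subseteq> E))"

definition restricted_case_II :: "('a \<Rightarrow> 'a set set option) \<Rightarrow> bool" where
  "restricted_case_II idr \<longleftrightarrow> (\<forall>e S. idr e = Some S \<longrightarrow> (\<forall>s\<in>S. card s = 1))"

fun fail_step :: "'a set \<Rightarrow> ('a \<Rightarrow> 'a set set option) \<Rightarrow> 'a set \<Rightarrow> 'a set \<Rightarrow> nat \<Rightarrow> 'a set" where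
  "fail_step E idr E' H 0 = E' - H"
| "fail_step E idr E' H (Suc t) =
     fail_step E idr E' H t \<union>
     {e \<in> E - H. \<exists>S. idr e = Some S \<and> (\<forall>s\<in>S. s \<inter> fail_step E idr E' H t \<noteq> {})}"

definition final_failed :: "'a set \<Rightarrow> ('a \<Rightarrow> 'a set set option) \<Rightarrow> 'a set \<Rightarrow> 'a set \<Rightarrow> 'a set" where
  "final_failed E idr E' H = fail_step E idr E' H (card E - 1)"

definition kill_set :: "'a set \<Rightarrow> ('a \<Rightarrow> 'a set set option) \<Rightarrow> 'a set \<Rightarrow> 'a set" where
  "kill_set E idr E' = final_failed E idr E' {}"

definition protection_set :: "'a set \<Rightarrow> ('a \<Rightarrow> 'a set set option) \<Rightarrow> 'a set \<Rightarrow> 'a set \<Rightarrow> 'a set" where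
  "protection_set E idr H E' = kill_set E idr E' - final_failed E idr E' H"

end

theory Submission
  imports Defs
begin

text \<open>Hardening more entities only removes failures. Conversely, an entity failing under both
  hardenings H1 and H2 fails under H1 \<union> H2: if it is not initially failing, every minterm of its
  IDR contains an earlier failure under each hardening, and since a minterm is a single entity
  this is the same entity for both, which fails under H1 \<union> H2 by induction on the time step.
  (A minterm of size two could instead contain one entity saved by H1 and another saved by H2.)
  So F(E', H1 \<union> H2) = F(E', H1) \<inter> F(E', H2), and complementing within the kill set turns this
  intersection into the union of the protection sets.\<close>

lemma fail_step_mono:
  "s \<le> t \<Longrightarrow> fail_step E idr E' H s \<subseteq> fail_step E idr E' H t"
  by (rule lift_Suc_mono_le[of "fail_step E idr E' H"]) auto

lemma fail_step_SucD:
  assumes "x \<in> fail_step E idr E' H (Suc t)"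
  shows "x \<in> E' - H \<or>
    (x \<in> E - H \<and> (\<exists>S. idr x = Some S \<and> (\<forall>s\<in>S. s \<inter> fail_step E idr E' H t \<noteq> {})))"
  using assms
proof (induction t arbitrary: x)
  case 0
  then show ?case by auto
next
  case (Suc t)
  have "fail_step E idr E' H t \<subseteq> fail_step E idr E' H (Suc t)"
    by (rule fail_step_mono) simp
  with Suc.IH Suc.prems show ?case by fastforce
qed

lemma fail_step_antimono_hardened:
  assumes "H1 \<subseteq> H2"
  shows "fail_step E idr E' H2 t \<subseteq> fail_step E idr E' H1 t"
proof (induction t)
  case 0
  show ?case using assms by auto
next
  case (Suc t)
  show ?case
  proof
    fix e
    assume "e \<in> fail_step E idr E' H2 (Suc t)"
    then consider "e \<in> fail_step E idr E' H2 t"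
      | S where "e \<in> E - H2" "idr e = Some S" "\<forall>s\<in>S. s \<inter> fail_step E idr E' H2 t \<noteq> {}"
      by auto
    then show "e \<in> fail_step E idr E' H1 (Suc t)"
    proof cases
      case 1
      with Suc.IH show ?thesis by auto
    next
      case (2 S)
      then have "\<forall>s\<in>S. s \<inter> fail_step E idr E' H1 t \<noteq> {}"
        using Suc.IH by blast
      with 2 assms show ?thesis by auto
    qed
  qed
qed

lemma fail_step_inter_subset_Un_hardened:
  assumes "restricted_case_II idr"
  shows "fail_step E idr E' H1 t \<inter> fail_step E idr E' H2 t \<subseteq> fail_step E idr E' (H1 \<union> H2) t"
proof (induction t)
  case 0
  show ?case by auto
next
  case (Suc t)
  show ?case
  proof
    fix x
    assume x: "x \<in> fail_step E idr E' H1 (Suc t) \<inter> fail_step E idr E' H2 (Suc t)"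
    note D1 = fail_step_SucD[OF IntD1[OF x]] and D2 = fail_step_SucD[OF IntD2[OF x]]
    show "x \<in> fail_step E idr E' (H1 \<union> H2) (Suc t)"
    proof (cases "x \<in> E'")
      case True
      with D1 D2 have "x \<in> fail_step E idr E' (H1 \<union> H2) 0" by auto
      then show ?thesis using fail_step_mono[of 0 "Suc t" E idr E' "H1 \<union> H2"] by auto
    next
      case False
      with D1 obtain S where S: "idr x = Some S" "x \<in> E - H1"
        "\<forall>s\<in>S. s \<inter> fail_step E idr E' H1 t \<noteq> {}"
        by blast
      from False D2 S(1) have S2: "x \<in> E - H2" "\<forall>s\<in>S. s \<inter> fail_step E idr E' H2 t \<noteq> {}"
        by auto
      have "s \<inter> fail_step E idr E' (H1 \<union> H2) t \<noteq> {}" if "s \<in> S" for s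
      proof -
        have "card s = 1"
          using assms S(1) that unfolding restricted_case_II_def by blast
        then obtain y where "s = {y}" by (rule card_1_singletonE)
        with S(3) S2(2) that have "y \<in> fail_step E idr E' H1 t \<inter> fail_step E idr E' H2 t"
          by auto
        with Suc.IH \<open>s = {y}\<close> show ?thesis by auto
      qed
      with S(1,2) S2(1) show ?thesis by auto
    qed
  qed
qed

lemma fail_step_Un_hardened:
  assumes "restricted_case_II idr"
  shows "fail_step E idr E' (H1 \<union> H2) t = fail_step E idr E' H1 t \<inter> fail_step E idr E' H2 t"
  using fail_step_inter_subset_Un_hardened[OF assms]
    fail_step_antimono_hardened[of H1 "H1 \<union> H2"] fail_step_antimono_hardened[of H2 "H1 \<union> H2"]
  by blast

lemma protection_set_Un:
  assumes "restricted_case_II idr"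
  shows "protection_set E idr (H1 \<union> H2) E' = protection_set E idr H1 E' \<union> protection_set E idr H2 E'"
  unfolding protection_set_def final_failed_def fail_step_Un_hardened[OF assms] by blast

text \<open>The identity holds for arbitrary E' and hardened entities.\<close>

theorem theorem4:
  fixes E :: "'a set" and idr :: "'a \<Rightarrow> 'a set set option" and E' :: "'a set"
    and ei ej :: 'a
  assumes "wf_system E idr"
    and "restricted_case_II idr"
    and "E' \<subseteq> E"
    and "ei \<in> E" and "ej \<in> E"
  shows "protection_set E idr {ei} E' \<union> protection_set E idr {ej} E'
           = protection_set E idr {ei, ej} E'"
  unfolding insert_is_Un[of ei "{ej}"] by (rule protection_set_Un[OF assms(2), symmetric])

end
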